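(* Let $\rho$ be a state of $A$ and $\sigma$ a state of $B$. Let $\mathcal{H}_S\subseteq\mathcal{H}_B$ be a subspace such that (1) $\mathcal{H}_B=\mathcal{H}_S\oplus\mathcal{H}_S^\perp$ with $U_B(g)=U_S(g)\oplus U_{S^\perp}(g)$ for all $g$ (i.e. $\mathcal{H}_S$ is invariant and carries the restricted representation $U_S$), and (2) $\Pi_S\sigma\Pi_S=\sigma$, where $\Pi_S$ is the projector onto $\mathcal{H}_S$. Let $S$ be the system with Hilbert space $\mathcal{H}_S$ and representation $U_S$. Then there exists a $G$-covariant channel from $A$ to $B$ mapping $\rho$ to $\sigma$ if and only if there exists a $G$-covariant channel from $A$ to $S$ mapping $\rho$ to $\sigma$.
   Context: $G$ is a compact group; finite-dimensional systems carry continuous unitary representations. A channel (CPTP map) $\mathcal{E}$ from system $X$ to system $Y$ is $G$-covariant if $\mathcal{E}(U_X(g)MU_X(g)^\dagger)=U_Y(g)\mathcal{E}(M)U_Y(g)^\dagger$ for all $g\in G$ and all operators $M$. *)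

theory Defs
  imports "HOL-Analysis.Analysis" "HOL-Algebra.Group" "Jordan_Normal_Form.Matrix"
begin

definition compact_group :: "('g, 'b) monoid_scheme \<Rightarrow> 'g topology \<Rightarrow> bool" where
  "compact_group G T \<longleftrightarrow> group G \<and> topspace T = carrier G \<and> compact_space T \<and> Hausdorff_space T
     \<and> continuous_map (prod_topology T T) T (\<lambda>(g, h). g \<otimes>\<^bsub>G\<^esub> h)
     \<and> continuous_map T T (\<lambda>g. inv\<^bsub>G\<^esub> g)"

text \<open>Operators on the finite-dimensional Hilbert space C^n are n x n complex matrices.\<close>
definition adj :: "complex mat \<Rightarrow> complex mat" where
  "adj A = mat (dim_col A) (dim_row A) (\<lambda>(i, j). cnj (A $$ (j, i)))"

definition mtrace :: "complex mat \<Rightarrow> complex" where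
  "mtrace A = (\<Sum>i<dim_row A. A $$ (i, i))"

definition unitary_mat :: "nat \<Rightarrow> complex mat \<Rightarrow> bool" where
  "unitary_mat n U \<longleftrightarrow> U \<in> carrier_mat n n \<and> adj U * U = 1\<^sub>m n \<and> U * adj U = 1\<^sub>m n"

definition psd :: "nat \<Rightarrow> complex mat \<Rightarrow> bool" where
  "psd n A \<longleftrightarrow> A \<in> carrier_mat n n \<and>
     (\<forall>v \<in> carrier_vec n. Im (conjugate v \<bullet> (A *\<^sub>v v)) = 0 \<and> Re (conjugate v \<bullet> (A *\<^sub>v v)) \<ge> 0)"

definition is_state :: "nat \<Rightarrow> complex mat \<Rightarrow> bool" where
  "is_state n \<rho> \<longleftrightarrow> psd n \<rho> \<and> mtrace \<rho> = 1"

definition cont_unitary_rep :: "('g, 'b) monoid_scheme \<Rightarrow> 'g topology \<Rightarrow> nat \<Rightarrow> ('g \<Rightarrow> complex mat) \<Rightarrow> bool" where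
  "cont_unitary_rep G T n U \<longleftrightarrow>
     (\<forall>g \<in> carrier G. unitary_mat n (U g)) \<and>
     (\<forall>g \<in> carrier G. \<forall>h \<in> carrier G. U (g \<otimes>\<^bsub>G\<^esub> h) = U g * U h) \<and>
     U \<one>\<^bsub>G\<^esub> = 1\<^sub>m n \<and>
     (\<forall>i < n. \<forall>j < n. continuous_map T euclidean (\<lambda>g. U g $$ (i, j)))"

text \<open>The (a, b) block (of size m x m) of a (k m) x (k m) matrix, viewed as an element of
  M_k \<otimes> M_m.\<close>
definition blk :: "nat \<Rightarrow> complex mat \<Rightarrow> nat \<Rightarrow> nat \<Rightarrow> complex mat" where
  "blk m M a b = mat m m (\<lambda>(r, s). M $$ (a * m + r, b * m + s))"

text \<open>The map id_k \<otimes> E from M_k \<otimes> M_m to M_k \<otimes> M_n (blockwise application of E).\<close>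
definition ampl :: "nat \<Rightarrow> nat \<Rightarrow> nat \<Rightarrow> (complex mat \<Rightarrow> complex mat) \<Rightarrow> complex mat \<Rightarrow> complex mat" where
  "ampl k m n E M = mat (k * n) (k * n) (\<lambda>(i, j). E (blk m M (i div n) (j div n)) $$ (i mod n, j mod n))"

definition channel :: "nat \<Rightarrow> nat \<Rightarrow> (complex mat \<Rightarrow> complex mat) \<Rightarrow> bool" where
  "channel m n E \<longleftrightarrow>
     (\<forall>M \<in> carrier_mat m m. E M \<in> carrier_mat n n) \<and>
     (\<forall>M \<in> carrier_mat m m. \<forall>N \<in> carrier_mat m m. E (M + N) = E M + E N) \<and>
     (\<forall>M \<in> carrier_mat m m. \<forall>c. E (c \<cdot>\<^sub>m M) = c \<cdot>\<^sub>m E M) \<and>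
     (\<forall>M \<in> carrier_mat m m. mtrace (E M) = mtrace M) \<and>
     (\<forall>k. \<forall>M. psd (k * m) M \<longrightarrow> psd (k * n) (ampl k m n E M))"

definition covariant :: "('g, 'b) monoid_scheme \<Rightarrow> nat \<Rightarrow> ('g \<Rightarrow> complex mat) \<Rightarrow> nat \<Rightarrow> ('g \<Rightarrow> complex mat)
    \<Rightarrow> (complex mat \<Rightarrow> complex mat) \<Rightarrow> bool" where
  "covariant G m UX n UY E \<longleftrightarrow>
     (\<forall>g \<in> carrier G. \<forall>M \<in> carrier_mat m m.
        E (UX g * M * adj (UX g)) = UY g * E M * adj (UY g))"

definition cov_channel :: "('g, 'b) monoid_scheme \<Rightarrow> nat \<Rightarrow> ('g \<Rightarrow> complex mat) \<Rightarrow> nat \<Rightarrow> ('g \<Rightarrow> complex mat)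
    \<Rightarrow> (complex mat \<Rightarrow> complex mat) \<Rightarrow> bool" where
  "cov_channel G m UX n UY E \<longleftrightarrow> channel m n E \<and> covariant G m UX n UY E"

end

theory Submission
  imports Defs
begin

text \<open>Both directions compose the given covariant channel with a fixed covariant channel
  between B and S. From S to B one embeds, \<open>X \<mapsto> V * X * adj V\<close>: since the range of V is
  invariant, V intertwines \<open>adj V * UB g * V\<close> with \<open>UB g\<close>, and
  \<open>V * adj V * \<sigma> * (V * adj V) = \<sigma>\<close>. From B to S one compresses,
  \<open>X \<mapsto> adj V * X * V + (mtrace X - mtrace (adj V * X * V)) / dS \<cdot> 1\<close>: this is a channel
  (it has explicit Kraus operators), it is covariant because the projector \<open>V * adj V\<close>
  commutes with \<open>UB g\<close>, and it sends \<sigma> to \<open>adj V * \<sigma> * V\<close> because \<sigma> has no weight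
  outside the range of V. That \<open>dS > 0\<close> follows from \<open>mtrace \<sigma> = 1\<close>.\<close>

lemma adj_carrier [simp]: "A \<in> carrier_mat n m \<Longrightarrow> adj A \<in> carrier_mat m n"
  unfolding adj_def by auto

lemma adj_dims [simp]: "dim_row (adj A) = dim_col A" "dim_col (adj A) = dim_row A"
  unfolding adj_def by auto

lemma adj_index [simp]: "i < dim_col A \<Longrightarrow> j < dim_row A \<Longrightarrow> adj A $$ (i, j) = cnj (A $$ (j, i))"
  unfolding adj_def by auto

lemma adj_adj [simp]: "adj (adj A) = A"
  by (rule eq_matI) (auto simp: adj_def)

lemma adj_mult: "A \<in> carrier_mat n m \<Longrightarrow> B \<in> carrier_mat m l \<Longrightarrow> adj (A * B) = adj B * adj A"
  by (rule eq_matI) (auto simp: adj_def scalar_prod_def intro!: sum.cong)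

lemma adj_minus: "A \<in> carrier_mat n m \<Longrightarrow> B \<in> carrier_mat n m \<Longrightarrow> adj (A - B) = adj A - adj B"
  by (rule eq_matI) (auto simp: adj_def)

lemma mult_assoc_dims:
  "dim_col A = dim_row B \<Longrightarrow> dim_col B = dim_row C \<Longrightarrow> A * B * C = A * (B * C)"
  by (rule assoc_mult_mat[of A "dim_row A" "dim_col A" B "dim_col B" C "dim_col C"]) auto

lemma sandwich_comp:
  assumes "A \<in> carrier_mat n m" "B \<in> carrier_mat m l" "X \<in> carrier_mat l l"
  shows "A * (B * X * adj B) * adj A = A * B * X * adj (A * B)"
  using assms by (simp del: assoc_mult_mat add: adj_mult mult_assoc_dims carrier_matD)

lemma index_mult_mult_mat:
  assumes "A \<in> carrier_mat n1 n2" "B \<in> carrier_mat n2 n3" "C \<in> carrier_mat n3 n4" "i < n1" "j < n4"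
  shows "(A * B * C) $$ (i, j) = (\<Sum>p<n2. \<Sum>q<n3. A $$ (i, p) * B $$ (p, q) * C $$ (q, j))"
proof -
  have "(A * B * C) $$ (i, j) = (\<Sum>q<n3. (\<Sum>p<n2. A $$ (i, p) * B $$ (p, q)) * C $$ (q, j))"
    using assms
    by (auto simp del: assoc_mult_mat simp: scalar_prod_def atLeast0LessThan intro!: sum.cong)
  also have "\<dots> = (\<Sum>p<n2. \<Sum>q<n3. A $$ (i, p) * B $$ (p, q) * C $$ (q, j))"
    by (simp add: sum_distrib_right sum.swap[of _ "{..<n3}"])
  finally show ?thesis .
qed

lemma mtrace_add:
  "A \<in> carrier_mat n n \<Longrightarrow> B \<in> carrier_mat n n \<Longrightarrow> mtrace (A + B) = mtrace A + mtrace B"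
  by (auto simp: mtrace_def sum.distrib)

lemma mtrace_minus:
  "A \<in> carrier_mat n n \<Longrightarrow> B \<in> carrier_mat n n \<Longrightarrow> mtrace (A - B) = mtrace A - mtrace B"
  by (auto simp: mtrace_def sum_subtractf)

lemma mtrace_smult: "A \<in> carrier_mat n n \<Longrightarrow> mtrace (c \<cdot>\<^sub>m A) = c * mtrace A"
  by (auto simp: mtrace_def sum_distrib_left)

lemma mtrace_one: "mtrace (1\<^sub>m n) = of_nat n"
  by (simp add: mtrace_def)

lemma mtrace_comm:
  assumes "A \<in> carrier_mat n m" "B \<in> carrier_mat m n"
  shows "mtrace (A * B) = mtrace (B * A)"
proof -
  have "mtrace (A * B) = (\<Sum>i<n. \<Sum>k<m. A $$ (i, k) * B $$ (k, i))"
    using assms by (auto simp: mtrace_def scalar_prod_def atLeast0LessThan intro!: sum.cong)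
  also have "\<dots> = (\<Sum>k<m. \<Sum>i<n. B $$ (k, i) * A $$ (i, k))"
    by (subst sum.swap) (simp add: mult.commute)
  also have "\<dots> = mtrace (B * A)"
    using assms by (auto simp: mtrace_def scalar_prod_def atLeast0LessThan intro!: sum.cong)
  finally show ?thesis .
qed

lemma mtrace_sandwich_isometry:
  assumes W: "W \<in> carrier_mat n d" "adj W * W = 1\<^sub>m d" and Y: "Y \<in> carrier_mat d d"
  shows "mtrace (W * Y * adj W) = mtrace Y"
proof -
  have "mtrace (W * Y * adj W) = mtrace (adj W * (W * Y))"
    by (rule mtrace_comm[of _ n d]) (use W Y in auto)
  also have "adj W * (W * Y) = Y"
    using W Y by (simp flip: assoc_mult_mat[of "adj W" d n W d Y d])
  finally show ?thesis .
qed

lemma sprod_adj_mult_mat_vec: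
  assumes A: "A \<in> carrier_mat n m" and w: "w \<in> carrier_vec n" and v: "v \<in> carrier_vec m"
  shows "conjugate v \<bullet> (adj A *\<^sub>v w) = conjugate (A *\<^sub>v v) \<bullet> w"
proof -
  have "conjugate v \<bullet> (adj A *\<^sub>v w) = (\<Sum>j<m. \<Sum>i<n. cnj (A $$ (i, j) * v $ j) * w $ i)"
    using assms
    by (auto simp: scalar_prod_def atLeast0LessThan sum_distrib_left mult_ac intro!: sum.cong)
  also have "\<dots> = conjugate (A *\<^sub>v v) \<bullet> w"
    using assms by (subst sum.swap)
      (auto simp: scalar_prod_def atLeast0LessThan sum_distrib_right intro!: sum.cong)
  finally show ?thesis .
qed

lemma psd_sandwich:
  assumes Y: "psd n Y" and A: "A \<in> carrier_mat m n"
  shows "psd m (A * Y * adj A)"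
  unfolding psd_def
proof (intro conjI ballI)
  have Yc: "Y \<in> carrier_mat n n" using Y by (simp add: psd_def)
  show "A * Y * adj A \<in> carrier_mat m m" using Yc A by auto
  fix v :: "complex vec" assume v: "v \<in> carrier_vec m"
  define w where "w = adj A *\<^sub>v v"
  have w: "w \<in> carrier_vec n" using adj_carrier[OF A] v by (simp add: w_def)
  have "(A * Y * adj A) *\<^sub>v v = adj (adj A) *\<^sub>v (Y *\<^sub>v w)"
    using assoc_mult_mat_vec[OF mult_carrier_mat[OF A Yc] adj_carrier[OF A] v]
      assoc_mult_mat_vec[OF A Yc w] by (simp add: w_def)
  then have "conjugate v \<bullet> ((A * Y * adj A) *\<^sub>v v) = conjugate w \<bullet> (Y *\<^sub>v w)"
    using sprod_adj_mult_mat_vec[of "adj A" n m "Y *\<^sub>v w" v] A Yc v w by (simp add: w_def)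
  then show "Im (conjugate v \<bullet> ((A * Y * adj A) *\<^sub>v v)) = 0"
    "0 \<le> Re (conjugate v \<bullet> ((A * Y * adj A) *\<^sub>v v))"
    using Y w unfolding psd_def by auto
qed

lemma sprod_mult_mat_vec_expand:
  assumes "X \<in> carrier_mat n n" "v \<in> carrier_vec n"
  shows "conjugate v \<bullet> (X *\<^sub>v v) = (\<Sum>x<n. \<Sum>y<n. cnj (v $ x) * X $$ (x, y) * v $ y)"
  using assms
  by (auto simp: scalar_prod_def atLeast0LessThan sum_distrib_left mult.assoc intro!: sum.cong)

lemma psd_sum_entrywise:
  assumes I: "finite I" and X: "\<And>i. i \<in> I \<Longrightarrow> psd n (X i)"
  shows "psd n (mat n n (\<lambda>(r, s). \<Sum>i\<in>I. X i $$ (r, s)))"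
  unfolding psd_def
proof (intro conjI ballI)
  fix v :: "complex vec" assume v: "v \<in> carrier_vec n"
  have Xc: "X i \<in> carrier_mat n n" if "i \<in> I" for i using X[OF that] by (simp add: psd_def)
  have "conjugate v \<bullet> (mat n n (\<lambda>(r, s). \<Sum>i\<in>I. X i $$ (r, s)) *\<^sub>v v)
      = (\<Sum>x<n. \<Sum>y<n. \<Sum>i\<in>I. cnj (v $ x) * X i $$ (x, y) * v $ y)"
    using v by (subst sprod_mult_mat_vec_expand)
      (auto simp: sum_distrib_left sum_distrib_right intro!: sum.cong)
  also have "\<dots> = (\<Sum>i\<in>I. \<Sum>x<n. \<Sum>y<n. cnj (v $ x) * X i $$ (x, y) * v $ y)"
    by (simp add: sum.swap[of _ I])
  also have "\<dots> = (\<Sum>i\<in>I. conjugate v \<bullet> (X i *\<^sub>v v))"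
    by (intro sum.cong refl sprod_mult_mat_vec_expand[symmetric] Xc v)
  finally have eq: "conjugate v \<bullet> (mat n n (\<lambda>(r, s). \<Sum>i\<in>I. X i $$ (r, s)) *\<^sub>v v)
      = (\<Sum>i\<in>I. conjugate v \<bullet> (X i *\<^sub>v v))" .
  have "Im (conjugate v \<bullet> (X i *\<^sub>v v)) = 0" "0 \<le> Re (conjugate v \<bullet> (X i *\<^sub>v v))" if "i \<in> I" for i
    using X[OF that] v unfolding psd_def by auto
  then show "Im (conjugate v \<bullet> (mat n n (\<lambda>(r, s). \<Sum>i\<in>I. X i $$ (r, s)) *\<^sub>v v)) = 0"
    "0 \<le> Re (conjugate v \<bullet> (mat n n (\<lambda>(r, s). \<Sum>i\<in>I. X i $$ (r, s)) *\<^sub>v v))"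
    unfolding eq by (auto simp: Im_sum Re_sum intro: sum_nonneg)
qed simp

section \<open>Block matrices\<close>

lemma block_index_less: "a < k \<Longrightarrow> r < n \<Longrightarrow> a * n + r < k * (n :: nat)"
proof -
  assume "a < k" "r < n"
  then have "a * n + r < Suc a * n" by simp
  also have "\<dots> \<le> k * n" using \<open>a < k\<close> by (intro mult_right_mono) auto
  finally show ?thesis .
qed

lemma block_index_decomp:
  assumes "i < k * (n :: nat)"
  obtains a r where "a < k" "r < n" "i = a * n + r"
proof
  have "0 < n" using assms by (cases n) auto
  then show "i div n < k" "i mod n < n" "i = i div n * n + i mod n"
    using assms by (auto simp: div_less_iff_less_mult)
qed

lemma blk_index [simp]: "r < m \<Longrightarrow> s < m \<Longrightarrow> blk m M a b $$ (r, s) = M $$ (a * m + r, b * m + s)"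
  by (simp add: blk_def)

lemma blk_dims [simp]: "dim_row (blk m M a b) = m" "dim_col (blk m M a b) = m"
  by (simp_all add: blk_def)

lemma blk_carrier [simp]: "blk m M a b \<in> carrier_mat m m"
  by (simp add: carrier_matI)

lemma eq_mat_blocksI:
  assumes "A \<in> carrier_mat (k * n) (k * n)" "B \<in> carrier_mat (k * n) (k * n)"
    and "\<And>a b. a < k \<Longrightarrow> b < k \<Longrightarrow> blk n A a b = blk n B a b"
  shows "A = B"
proof (rule eq_matI)
  fix i j assume "i < dim_row B" "j < dim_col B"
  then obtain a r b s where "a < k" "r < n" "i = a * n + r" "b < k" "s < n" "j = b * n + s"
    using assms(2) by (metis block_index_decomp carrier_matD)
  then show "A $$ (i, j) = B $$ (i, j)"
    using assms(3)[of a b] by (metis blk_index)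
qed (use assms in auto)

lemma ampl_carrier [simp]: "ampl k m n E M \<in> carrier_mat (k * n) (k * n)"
  by (simp add: ampl_def)

lemma blk_ampl:
  assumes "E (blk m M a b) \<in> carrier_mat n n" "a < k" "b < k"
  shows "blk n (ampl k m n E M) a b = E (blk m M a b)"
  using assms block_index_less[of a k _ n] block_index_less[of b k _ n]
  by (intro eq_matI) (auto simp: ampl_def)

lemma sum_supported_on_block:
  fixes g :: "nat \<Rightarrow> 'a :: comm_monoid_add"
  assumes a: "a < k" and g: "\<And>u. u < k * m \<Longrightarrow> u div m \<noteq> a \<Longrightarrow> g u = 0"
  shows "(\<Sum>u<k * m. g u) = (\<Sum>p<m. g (a * m + p))"
proof -
  have "(\<Sum>u<k * m. g u) = (\<Sum>u\<in>{a * m..<a * m + m}. g u)"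
  proof (rule sum.mono_neutral_right)
    show "{a * m..<a * m + m} \<subseteq> {..<k * m}"
      using block_index_less[OF a, of _ m] by (auto simp: le_iff_add)
    show "\<forall>u\<in>{..<k * m} - {a * m..<a * m + m}. g u = 0"
    proof
      fix u assume u: "u \<in> {..<k * m} - {a * m..<a * m + m}"
      have m: "0 < m" using u by (cases m) auto
      have "u div m \<noteq> a"
      proof
        assume "u div m = a"
        moreover have "u div m * m \<le> u" "u < u div m * m + m"
          using div_mult_mod_eq[of u m] mod_less_divisor[OF m, of u] by linarith+
        ultimately show False using u by auto
      qed
      then show "g u = 0" using u g by auto
    qed
  qed auto
  also have "\<dots> = (\<Sum>p<m. g (a * m + p))"
    using sum.shift_bounds_nat_ivl[of g 0 "a * m" m]
    by (simp add: atLeast0LessThan add.commute)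
  finally show ?thesis .
qed

definition diag_blocks :: "nat \<Rightarrow> complex mat \<Rightarrow> complex mat" where
  "diag_blocks k K = mat (k * dim_row K) (k * dim_col K)
     (\<lambda>(x, y). if x div dim_row K = y div dim_col K
        then K $$ (x mod dim_row K, y mod dim_col K) else 0)"

lemma diag_blocks_carrier: "K \<in> carrier_mat n m \<Longrightarrow> diag_blocks k K \<in> carrier_mat (k * n) (k * m)"
  by (simp add: diag_blocks_def)

lemma diag_blocks_sandwich_index:
  assumes K: "K \<in> carrier_mat n m" and Y: "Y \<in> carrier_mat (k * m) (k * m)"
    and ab: "a < k" "b < k" and rs: "r < n" "s < n"
  shows "(diag_blocks k K * Y * adj (diag_blocks k K)) $$ (a * n + r, b * n + s)
    = (K * blk m Y a b * adj K) $$ (r, s)"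
proof -
  define D where "D = diag_blocks k K"
  have D: "D \<in> carrier_mat (k * n) (k * m)" unfolding D_def by (rule diag_blocks_carrier[OF K])
  have D_index: "D $$ (c * n + t, u) = (if u div m = c then K $$ (t, u mod m) else 0)"
    if "c < k" "t < n" "u < k * m" for c t u
    using that K block_index_less[of c k t n] by (auto simp: D_def diag_blocks_def)
  have D_block: "D $$ (c * n + t, c * m + p) = K $$ (t, p)" if "c < k" "t < n" "p < m" for c t p
    using that D_index block_index_less[of c k p m] by simp
  have "(D * Y * adj D) $$ (a * n + r, b * n + s)
      = (\<Sum>u<k * m. \<Sum>w<k * m. D $$ (a * n + r, u) * Y $$ (u, w) * adj D $$ (w, b * n + s))"
    by (rule index_mult_mult_mat[OF D Y adj_carrier[OF D]])
      (use block_index_less[OF ab(1) rs(1)] block_index_less[OF ab(2) rs(2)] in auto)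
  also have "\<dots> = (\<Sum>p<m. \<Sum>w<k * m. D $$ (a * n + r, a * m + p) * Y $$ (a * m + p, w)
      * adj D $$ (w, b * n + s))"
    by (rule sum_supported_on_block[OF ab(1)]) (simp add: D_index ab rs)
  also have "\<dots> = (\<Sum>p<m. \<Sum>q<m. D $$ (a * n + r, a * m + p) * Y $$ (a * m + p, b * m + q)
      * adj D $$ (b * m + q, b * n + s))"
    using D block_index_less[OF ab(2) rs(2)]
    by (intro sum.cong refl sum_supported_on_block[OF ab(2)]) (simp add: D_index ab rs)
  also have "\<dots> = (\<Sum>p<m. \<Sum>q<m. K $$ (r, p) * blk m Y a b $$ (p, q) * adj K $$ (q, s))"
    using K D ab rs block_index_less[OF ab(1)] block_index_less[OF ab(2)]
    by (intro sum.cong refl) (simp add: D_block)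
  also have "\<dots> = (K * blk m Y a b * adj K) $$ (r, s)"
    by (rule index_mult_mult_mat[symmetric, OF K blk_carrier adj_carrier[OF K] rs])
  finally show ?thesis unfolding D_def .
qed

section \<open>Kraus maps\<close>

definition kraus_map :: "nat \<Rightarrow> 'i set \<Rightarrow> ('i \<Rightarrow> complex mat) \<Rightarrow> complex mat \<Rightarrow> complex mat" where
  "kraus_map n I K X = mat n n (\<lambda>(r, s). \<Sum>i\<in>I. (K i * X * adj (K i)) $$ (r, s))"

lemma kraus_map_dims [simp]: "dim_row (kraus_map n I K X) = n" "dim_col (kraus_map n I K X) = n"
  by (simp_all add: kraus_map_def)

lemma kraus_map_carrier [simp]: "kraus_map n I K X \<in> carrier_mat n n"
  by (simp add: carrier_matI)

lemma kraus_map_index [simp]: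
  "r < n \<Longrightarrow> s < n \<Longrightarrow> kraus_map n I K X $$ (r, s) = (\<Sum>i\<in>I. (K i * X * adj (K i)) $$ (r, s))"
  by (simp add: kraus_map_def)

lemma kraus_map_add:
  assumes K: "\<And>i. i \<in> I \<Longrightarrow> K i \<in> carrier_mat n m" and X: "X \<in> carrier_mat m m" "Y \<in> carrier_mat m m"
  shows "kraus_map n I K (X + Y) = kraus_map n I K X + kraus_map n I K Y"
proof (rule eq_matI)
  fix r s assume "r < dim_row (kraus_map n I K X + kraus_map n I K Y)"
    "s < dim_col (kraus_map n I K X + kraus_map n I K Y)"
  then have rs: "r < n" "s < n" by auto
  have "(K i * (X + Y) * adj (K i)) $$ (r, s)
      = (K i * X * adj (K i)) $$ (r, s) + (K i * Y * adj (K i)) $$ (r, s)" if "i \<in> I" for i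
    using K[OF that] X rs
    by (simp add: mult_add_distrib_mat[of _ n m] add_mult_distrib_mat[of _ n m _ _ n])
  then show "kraus_map n I K (X + Y) $$ (r, s) = (kraus_map n I K X + kraus_map n I K Y) $$ (r, s)"
    using rs by (simp add: sum.distrib)
qed auto

lemma kraus_map_smult:
  assumes K: "\<And>i. i \<in> I \<Longrightarrow> K i \<in> carrier_mat n m" and X: "X \<in> carrier_mat m m"
  shows "kraus_map n I K (c \<cdot>\<^sub>m X) = c \<cdot>\<^sub>m kraus_map n I K X"
proof (rule eq_matI)
  fix r s assume "r < dim_row (c \<cdot>\<^sub>m kraus_map n I K X)" "s < dim_col (c \<cdot>\<^sub>m kraus_map n I K X)"
  then have rs: "r < n" "s < n" by auto
  have "(K i * (c \<cdot>\<^sub>m X) * adj (K i)) $$ (r, s) = c * (K i * X * adj (K i)) $$ (r, s)"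
    if "i \<in> I" for i
    using K[OF that] X rs
    by (simp add: mult_smult_distrib[of _ n m] mult_smult_assoc_mat[of _ n m _ n])
  then show "kraus_map n I K (c \<cdot>\<^sub>m X) $$ (r, s) = (c \<cdot>\<^sub>m kraus_map n I K X) $$ (r, s)"
    using rs by (simp add: sum_distrib_left)
qed auto

lemma kraus_map_single:
  "K \<in> carrier_mat n m \<Longrightarrow> X \<in> carrier_mat m m \<Longrightarrow> kraus_map n {i} (\<lambda>_. K) X = K * X * adj K"
  by (rule eq_matI) (auto simp: kraus_map_def)

lemma kraus_map_Plus:
  assumes "finite I" "finite J"
  shows "kraus_map n (I <+> J) (case_sum K L) X = kraus_map n I K X + kraus_map n J L X"
  using assms by (intro eq_matI) (simp_all add: sum.Plus)

lemma psd_kraus_map: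
  assumes "psd m Y" "finite I" "\<And>i. i \<in> I \<Longrightarrow> K i \<in> carrier_mat n m"
  shows "psd n (kraus_map n I K Y)"
  unfolding kraus_map_def using assms by (intro psd_sum_entrywise psd_sandwich)

lemma ampl_kraus_map:
  assumes K: "\<And>i. i \<in> I \<Longrightarrow> K i \<in> carrier_mat n m" and Y: "Y \<in> carrier_mat (k * m) (k * m)"
  shows "ampl k m n (kraus_map n I K) Y = kraus_map (k * n) I (\<lambda>i. diag_blocks k (K i)) Y"
proof (rule eq_mat_blocksI)
  fix a b assume ab: "a < k" "b < k"
  have "blk n (kraus_map (k * n) I (\<lambda>i. diag_blocks k (K i)) Y) a b = kraus_map n I K (blk m Y a b)"
    using block_index_less[OF ab(1)] block_index_less[OF ab(2)]
    by (intro eq_matI) (auto simp: diag_blocks_sandwich_index[OF K Y ab] intro!: sum.cong)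
  then show "blk n (ampl k m n (kraus_map n I K) Y) a b
      = blk n (kraus_map (k * n) I (\<lambda>i. diag_blocks k (K i)) Y) a b"
    using ab by (simp add: blk_ampl)
qed auto

lemma psd_ampl_kraus_map:
  assumes Y: "psd (k * m) Y" and I: "finite I" and K: "\<And>i. i \<in> I \<Longrightarrow> K i \<in> carrier_mat n m"
  shows "psd (k * n) (ampl k m n (kraus_map n I K) Y)"
proof -
  have Yc: "Y \<in> carrier_mat (k * m) (k * m)"
    using Y by (simp add: psd_def)
  have "psd (k * n) (kraus_map (k * n) I (\<lambda>i. diag_blocks k (K i)) Y)"
    by (rule psd_kraus_map[OF Y I diag_blocks_carrier[OF K]])
  then show ?thesis
    by (simp add: ampl_kraus_map[OF K Yc])
qed

lemma channel_kraus_map: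
  assumes I: "finite I" and K: "\<And>i. i \<in> I \<Longrightarrow> K i \<in> carrier_mat n m"
    and tp: "\<And>X. X \<in> carrier_mat m m \<Longrightarrow> mtrace (kraus_map n I K X) = mtrace X"
  shows "channel m n (kraus_map n I K)"
  unfolding channel_def
  by (simp add: kraus_map_add[OF K] kraus_map_smult[OF K] tp psd_ampl_kraus_map[OF _ I K])

text \<open>The Kraus operators \<open>e_t * adj (A * e_l) / sqrt d\<close> of the trace-and-replace map
  \<open>X \<mapsto> mtrace (adj A * X * A) / d \<cdot> 1\<close>.\<close>
definition replace_kraus :: "complex mat \<Rightarrow> nat \<Rightarrow> nat \<times> nat \<Rightarrow> complex mat" where
  "replace_kraus A d = (\<lambda>(l, t). mat d (dim_row A)
     (\<lambda>(r, p). if r = t then cnj (A $$ (p, l)) / complex_of_real (sqrt (real d)) else 0))"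

lemma replace_kraus_sandwich_index:
  assumes A: "A \<in> carrier_mat n j" and X: "X \<in> carrier_mat n n" and l: "l < j"
    and rs: "r < d" "s < d"
  shows "(replace_kraus A d (l, t) * X * adj (replace_kraus A d (l, t))) $$ (r, s)
    = (if t = r \<and> t = s then (adj A * X * A) $$ (l, l) / of_nat d else 0)"
proof -
  define sq where "sq = complex_of_real (sqrt (real d))"
  have sq: "sq * sq = of_nat d"
    unfolding sq_def by (simp flip: of_real_mult)
  define K where "K = replace_kraus A d (l, t)"
  have K: "K \<in> carrier_mat d n"
    using A by (simp add: K_def replace_kraus_def)
  have K_index: "K $$ (r', p) = (if r' = t then cnj (A $$ (p, l)) / sq else 0)"
    if "r' < d" "p < n" for r' p
    using that A by (simp add: K_def replace_kraus_def sq_def)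
  have adj_K_index: "adj K $$ (q, s') = (if s' = t then A $$ (q, l) / sq else 0)"
    if "q < n" "s' < d" for q s'
    using that K by (simp add: K_index sq_def)
  have "(K * X * adj K) $$ (r, s) = (\<Sum>p<n. \<Sum>q<n. K $$ (r, p) * X $$ (p, q) * adj K $$ (q, s))"
    by (rule index_mult_mult_mat[OF K X adj_carrier[OF K] rs])
  also have "\<dots> = (if t = r \<and> t = s
      then (\<Sum>p<n. \<Sum>q<n. cnj (A $$ (p, l)) * X $$ (p, q) * A $$ (q, l)) / of_nat d else 0)"
    using rs by (cases "t = r \<and> t = s")
      (auto simp: K_index adj_K_index sum_divide_distrib simp flip: sq intro!: sum.cong sum.neutral)
  also have "\<dots> = (if t = r \<and> t = s then (adj A * X * A) $$ (l, l) / of_nat d else 0)"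
    using index_mult_mult_mat[OF adj_carrier[OF A] X A l l] A l by simp
  finally show ?thesis
    unfolding K_def .
qed

lemma kraus_map_replace:
  assumes A: "A \<in> carrier_mat n j" and X: "X \<in> carrier_mat n n"
  shows "kraus_map d ({..<j} \<times> {..<d}) (replace_kraus A d) X
    = (mtrace (adj A * X * A) / of_nat d) \<cdot>\<^sub>m 1\<^sub>m d"
proof (rule eq_matI)
  fix r s assume "r < dim_row ((mtrace (adj A * X * A) / of_nat d) \<cdot>\<^sub>m 1\<^sub>m d)"
    "s < dim_col ((mtrace (adj A * X * A) / of_nat d) \<cdot>\<^sub>m 1\<^sub>m d)"
  then have rs: "r < d" "s < d" by auto
  have "kraus_map d ({..<j} \<times> {..<d}) (replace_kraus A d) X $$ (r, s)
      = (\<Sum>l<j. \<Sum>t<d. if t = r \<and> t = s then (adj A * X * A) $$ (l, l) / of_nat d else 0)"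
    using rs
    by (auto simp: sum.cartesian_product' replace_kraus_sandwich_index[OF A X] intro!: sum.cong)
  also have "\<dots> = (if r = s then mtrace (adj A * X * A) / of_nat d else 0)"
    using rs A by (auto simp: mtrace_def sum_divide_distrib intro!: sum.neutral)
  finally show "kraus_map d ({..<j} \<times> {..<d}) (replace_kraus A d) X $$ (r, s)
      = ((mtrace (adj A * X * A) / of_nat d) \<cdot>\<^sub>m 1\<^sub>m d) $$ (r, s)"
    using rs by simp
qed auto

lemma channel_cong:
  assumes E: "channel m n E" and EF: "\<And>M. M \<in> carrier_mat m m \<Longrightarrow> E M = F M"
  shows "channel m n F"
proof -
  have "ampl k m n F M = ampl k m n E M" for k M
    by (simp add: ampl_def EF)
  then show ?thesis
    using E unfolding channel_def by (auto simp flip: EF)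
qed

lemma channel_comp:
  assumes E: "channel m n E" and F: "channel n l F"
  shows "channel m l (\<lambda>M. F (E M))"
proof -
  have EC: "E M \<in> carrier_mat n n" if "M \<in> carrier_mat m m" for M
    using E that by (simp add: channel_def)
  have FC: "F M \<in> carrier_mat l l" if "M \<in> carrier_mat n n" for M
    using F that by (simp add: channel_def)
  have "ampl k m l (\<lambda>M. F (E M)) M = ampl k n l F (ampl k m n E M)" for k M
    by (rule eq_mat_blocksI[of _ k l]) (simp_all add: blk_ampl EC FC)
  then show ?thesis
    using E F unfolding channel_def by (auto simp: EC)
qed

lemma covariant_comp:
  assumes "covariant G m UA n UB E" "covariant G n UB l UC F"
    and "\<And>M. M \<in> carrier_mat m m \<Longrightarrow> E M \<in> carrier_mat n n"
  shows "covariant G m UA l UC (\<lambda>M. F (E M))"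
  using assms unfolding covariant_def by simp

lemma cov_channel_comp:
  assumes "cov_channel G m UA n UB E" "cov_channel G n UB l UC F"
  shows "cov_channel G m UA l UC (\<lambda>M. F (E M))"
proof -
  have "channel m n E" "channel n l F" "covariant G m UA n UB E" "covariant G n UB l UC F"
    using assms by (simp_all add: cov_channel_def)
  moreover have "E M \<in> carrier_mat n n" if "M \<in> carrier_mat m m" for M
    using \<open>channel m n E\<close> that by (simp add: channel_def)
  ultimately show ?thesis
    unfolding cov_channel_def by (simp add: channel_comp covariant_comp)
qed

section \<open>Isometries onto invariant subspaces\<close>

lemma isometry_proj_idem:
  assumes V: "V \<in> carrier_mat n d" "adj V * V = 1\<^sub>m d"
  shows "V * adj V * (V * adj V) = V * adj V"
proof -
  have dims: "dim_row V = n" "dim_col V = d"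
    using V by auto
  have "V * adj V * (V * adj V) = V * (adj V * V) * adj V"
    by (simp del: assoc_mult_mat add: mult_assoc_dims dims)
  then show ?thesis
    using V by simp
qed

lemma isometry_intertwines:
  assumes V: "V \<in> carrier_mat n d" "adj V * V = 1\<^sub>m d" and U: "U \<in> carrier_mat n n"
    and comm: "U * (V * adj V) = V * adj V * U"
  shows "V * (adj V * U * V) = U * V" and "adj V * U * V * adj V = adj V * U"
proof -
  have dims: "dim_row V = n" "dim_col V = d" "dim_row U = n" "dim_col U = n"
    using V U by auto
  have "V * (adj V * U * V) = V * adj V * U * V"
    by (simp del: assoc_mult_mat add: mult_assoc_dims dims)
  also have "\<dots> = U * V * (adj V * V)"
    by (simp del: assoc_mult_mat add: mult_assoc_dims dims flip: comm)
  finally show "V * (adj V * U * V) = U * V"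
    using V U by simp
  have "adj V * U * V * adj V = adj V * (U * (V * adj V))"
    by (simp del: assoc_mult_mat add: mult_assoc_dims dims)
  also have "\<dots> = adj V * V * adj V * U"
    by (simp del: assoc_mult_mat add: mult_assoc_dims dims comm)
  finally show "adj V * U * V * adj V = adj V * U"
    using V U by simp
qed

lemma sandwich_intertwined_embed:
  assumes V: "V \<in> carrier_mat n d" "adj V * V = 1\<^sub>m d" and U: "U \<in> carrier_mat n n"
    and comm: "U * (V * adj V) = V * adj V * U" and X: "X \<in> carrier_mat d d"
  shows "V * (adj V * U * V * X * adj (adj V * U * V)) * adj V = U * (V * X * adj V) * adj U"
proof -
  have W: "adj V * U * V \<in> carrier_mat d d"
    using V U by (metis adj_carrier mult_carrier_mat)
  have "V * (adj V * U * V * X * adj (adj V * U * V)) * adj V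
      = V * (adj V * U * V) * X * adj (V * (adj V * U * V))"
    by (rule sandwich_comp[OF V(1) W X])
  also have "\<dots> = U * V * X * adj (U * V)"
    by (simp only: isometry_intertwines(1)[OF V U comm])
  also have "\<dots> = U * (V * X * adj V) * adj U"
    by (rule sandwich_comp[symmetric, OF U V(1) X])
  finally show ?thesis .
qed

lemma sandwich_intertwined_compress:
  assumes V: "V \<in> carrier_mat n d" "adj V * V = 1\<^sub>m d" and U: "U \<in> carrier_mat n n"
    and comm: "U * (V * adj V) = V * adj V * U" and X: "X \<in> carrier_mat n n"
  shows "adj V * (U * X * adj U) * V = adj V * U * V * (adj V * X * V) * adj (adj V * U * V)"
proof -
  have "adj V * (U * X * adj U) * V = adj V * U * X * adj (adj V * U)"
    using sandwich_comp[OF adj_carrier[OF V(1)] U X] by simp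
  also have "\<dots> = adj V * U * V * adj V * X * adj (adj V * U * V * adj V)"
    by (simp only: isometry_intertwines(2)[OF V U comm])
  also have "\<dots> = adj V * U * V * (adj V * X * V) * adj (adj V * U * V)"
    using sandwich_comp[OF _ adj_carrier[OF V(1)] X, of "adj V * U * V" d] V U
    by (simp add: mult_carrier_mat[OF mult_carrier_mat[OF adj_carrier[OF V(1)] U] V(1)])
  finally show ?thesis .
qed

lemma compression_mult:
  assumes V: "V \<in> carrier_mat n d" "adj V * V = 1\<^sub>m d"
    and U: "U \<in> carrier_mat n n" "U' \<in> carrier_mat n n"
    and comm: "U * (V * adj V) = V * adj V * U"
  shows "adj V * U * V * (adj V * U' * V) = adj V * (U * U') * V"
proof -
  have dims: "dim_row V = n" "dim_col V = d" "dim_row U = n" "dim_col U = n"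
    "dim_row U' = n" "dim_col U' = n"
    using V U by auto
  have "adj V * U * V * (adj V * U' * V) = adj V * U * V * adj V * U' * V"
    by (simp del: assoc_mult_mat add: mult_assoc_dims dims)
  also have "\<dots> = adj V * U * U' * V"
    by (simp only: isometry_intertwines(2)[OF V U(1) comm])
  also have "\<dots> = adj V * (U * U') * V"
    by (simp del: assoc_mult_mat add: mult_assoc_dims dims)
  finally show ?thesis .
qed

lemma unitary_compression:
  assumes V: "V \<in> carrier_mat n d" "adj V * V = 1\<^sub>m d" and U: "unitary_mat n U"
    and comm: "U * (V * adj V) = V * adj V * U"
  shows "unitary_mat d (adj V * U * V)"
proof -
  have Uc: "U \<in> carrier_mat n n" "adj U * U = 1\<^sub>m n" "U * adj U = 1\<^sub>m n"
    using U by (auto simp: unitary_mat_def)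
  have P: "V * adj V \<in> carrier_mat n n" "adj (V * adj V) = V * adj V"
    using V adj_mult[OF V(1) adj_carrier[OF V(1)]] by auto
  have "adj U * (V * adj V) = adj (V * adj V * U)"
    using adj_mult[OF P(1) Uc(1)] P(2) by simp
  also have "\<dots> = V * adj V * adj U"
    using adj_mult[OF Uc(1) P(1)] P(2) by (simp flip: comm)
  finally have comm': "adj U * (V * adj V) = V * adj V * adj U" .
  have adjW: "adj (adj V * U * V) = adj V * adj U * V"
    using adj_mult[OF mult_carrier_mat[OF adj_carrier[OF V(1)] Uc(1)] V(1)]
      adj_mult[OF adj_carrier[OF V(1)] Uc(1)]
      assoc_mult_mat[OF adj_carrier[OF V(1)] adj_carrier[OF Uc(1)] V(1)]
    by simp
  have "adj V * U * V * adj (adj V * U * V) = 1\<^sub>m d"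
    using compression_mult[OF V Uc(1) adj_carrier[OF Uc(1)] comm] V Uc unfolding adjW by simp
  moreover have "adj (adj V * U * V) * (adj V * U * V) = 1\<^sub>m d"
    using compression_mult[OF V adj_carrier[OF Uc(1)] Uc(1) comm'] V Uc unfolding adjW by simp
  ultimately show ?thesis
    using mult_carrier_mat[OF mult_carrier_mat[OF adj_carrier[OF V(1)] Uc(1)] V(1)]
    unfolding unitary_mat_def by simp
qed

lemma sandwich_add_smult_one:
  assumes W: "W \<in> carrier_mat n m" and A: "A \<in> carrier_mat m m"
  shows "W * (A + c \<cdot>\<^sub>m 1\<^sub>m m) * adj W = W * A * adj W + c \<cdot>\<^sub>m (W * adj W)"
proof -
  have "W * (A + c \<cdot>\<^sub>m 1\<^sub>m m) = W * A + c \<cdot>\<^sub>m W"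
    using mult_add_distrib_mat[OF W A smult_carrier_mat[OF one_carrier_mat]]
      mult_smult_distrib[OF W one_carrier_mat] W by simp
  then show ?thesis
    using add_mult_distrib_mat[OF mult_carrier_mat[OF W A] smult_carrier_mat[OF W]
        adj_carrier[OF W]]
      mult_smult_assoc_mat[OF W adj_carrier[OF W]] by simp
qed

lemma mtrace_isometry_complement:
  assumes V: "V \<in> carrier_mat n d" "adj V * V = 1\<^sub>m d" and X: "X \<in> carrier_mat n n"
  shows "mtrace (adj (1\<^sub>m n - V * adj V) * X * (1\<^sub>m n - V * adj V))
    = mtrace X - mtrace (adj V * X * V)"
proof -
  define P where "P = V * adj V"
  have P: "P \<in> carrier_mat n n" "adj P = P" "P * P = P"
    using V adj_mult[OF V(1) adj_carrier[OF V(1)]] isometry_proj_idem[OF V] by (auto simp: P_def)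
  have Q: "1\<^sub>m n - P \<in> carrier_mat n n" "adj (1\<^sub>m n - P) = 1\<^sub>m n - P"
    using P adj_minus[OF one_carrier_mat P(1)] by auto
  have "(1\<^sub>m n - P) * (1\<^sub>m n - P) = (1\<^sub>m n - P) - P * (1\<^sub>m n - P)"
    using minus_mult_distrib_mat[OF one_carrier_mat P(1) Q(1)] left_mult_one_mat[OF Q(1)] by simp
  also have "P * (1\<^sub>m n - P) = 0\<^sub>m n n"
    using mult_minus_distrib_mat[OF P(1) one_carrier_mat P(1)] P by simp
  also have "(1\<^sub>m n - P) - 0\<^sub>m n n = 1\<^sub>m n - P"
    using P(1) by (intro eq_matI) auto
  finally have QQ: "(1\<^sub>m n - P) * (1\<^sub>m n - P) = 1\<^sub>m n - P" .
  have "(1\<^sub>m n - P) * ((1\<^sub>m n - P) * X) = (1\<^sub>m n - P) * X"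
    by (simp only: assoc_mult_mat[OF Q(1) Q(1) X, symmetric] QQ)
  also have "\<dots> = X - P * X"
    using minus_mult_distrib_mat[OF one_carrier_mat P(1) X] X by simp
  finally have QX: "(1\<^sub>m n - P) * ((1\<^sub>m n - P) * X) = X - P * X" .
  have "mtrace ((1\<^sub>m n - P) * X * (1\<^sub>m n - P)) = mtrace (X - P * X)"
    using mtrace_comm[OF mult_carrier_mat[OF Q(1) X] Q(1)] unfolding QX .
  also have "\<dots> = mtrace X - mtrace (adj V * X * V)"
    using mtrace_comm[OF mult_carrier_mat[OF adj_carrier[OF V(1)] X] V(1)]
      assoc_mult_mat[OF V(1) adj_carrier[OF V(1)] X] mtrace_minus[OF X mult_carrier_mat[OF P(1) X]]
    by (simp add: P_def)
  finally show ?thesis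
    using Q(2) unfolding P_def by simp
qed

lemma mtrace_compression_supported:
  assumes V: "V \<in> carrier_mat n d" "adj V * V = 1\<^sub>m d" and X: "X \<in> carrier_mat n n"
    and supp: "V * adj V * X * (V * adj V) = X"
  shows "mtrace (adj V * X * V) = mtrace X"
proof -
  define P where "P = V * adj V"
  have P: "P \<in> carrier_mat n n" "P * P = P"
    using V isometry_proj_idem[OF V] by (auto simp: P_def)
  have "mtrace (adj V * X * V) = mtrace (P * X)"
    using mtrace_comm[OF mult_carrier_mat[OF adj_carrier[OF V(1)] X] V(1)]
      assoc_mult_mat[OF V(1) adj_carrier[OF V(1)] X] by (simp add: P_def)
  also have "\<dots> = mtrace (P * (P * X))"
    using P X by (simp flip: assoc_mult_mat[OF P(1) P(1) X])
  also have "\<dots> = mtrace (P * X * P)"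
    using mtrace_comm[OF mult_carrier_mat[OF P(1) X] P(1)] ..
  finally show ?thesis
    using supp by (simp add: P_def)
qed

section \<open>Embedding and compression\<close>

definition embed :: "complex mat \<Rightarrow> complex mat \<Rightarrow> complex mat" where
  "embed V X = V * X * adj V"

text \<open>The compression \<open>X \<mapsto> adj V * X * V\<close> loses the weight of X outside the range of V; it
  is added back as a multiple of the identity, which is invariant under every unitary and so keeps
  the map covariant.\<close>
definition compress :: "complex mat \<Rightarrow> complex mat \<Rightarrow> complex mat" where
  "compress V X = adj V * X * V
     + ((mtrace X - mtrace (adj V * X * V)) / of_nat (dim_col V)) \<cdot>\<^sub>m 1\<^sub>m (dim_col V)"

lemma channel_embed:
  assumes V: "V \<in> carrier_mat n d" "adj V * V = 1\<^sub>m d"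
  shows "channel d n (embed V)"
proof (rule channel_cong)
  show "channel d n (kraus_map n {()} (\<lambda>_. V))"
    using V by (intro channel_kraus_map) (simp_all add: kraus_map_single mtrace_sandwich_isometry)
  show "kraus_map n {()} (\<lambda>_. V) X = embed V X" if "X \<in> carrier_mat d d" for X
    using V that by (simp add: kraus_map_single embed_def)
qed

lemma mtrace_compress:
  assumes V: "V \<in> carrier_mat n d" and d: "0 < d" and X: "X \<in> carrier_mat n n"
  shows "mtrace (compress V X) = mtrace X"
proof -
  have "adj V * X * V \<in> carrier_mat d d"
    using V X by (metis adj_carrier mult_carrier_mat)
  then show ?thesis
    using V d by (simp add: compress_def mtrace_add[of _ d] mtrace_smult[of _ d] mtrace_one)
qed

lemma kraus_map_compress:
  assumes V: "V \<in> carrier_mat n d" "adj V * V = 1\<^sub>m d" and X: "X \<in> carrier_mat n n"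
  shows "kraus_map d ({()} <+> {..<n} \<times> {..<d})
      (case_sum (\<lambda>_. adj V) (replace_kraus (1\<^sub>m n - V * adj V) d)) X = compress V X"
proof -
  have Q: "1\<^sub>m n - V * adj V \<in> carrier_mat n n"
    using V by (metis adj_carrier minus_carrier_mat mult_carrier_mat one_carrier_mat)
  show ?thesis
    using V X
    by (simp add: kraus_map_Plus kraus_map_single[OF adj_carrier[OF V(1)] X]
        kraus_map_replace[OF Q X] mtrace_isometry_complement compress_def)
qed

lemma channel_compress:
  assumes V: "V \<in> carrier_mat n d" "adj V * V = 1\<^sub>m d" and d: "0 < d"
  shows "channel n d (compress V)"
proof (rule channel_cong)
  let ?I = "{()} <+> {..<n} \<times> {..<d}"
  let ?K = "case_sum (\<lambda>_. adj V) (replace_kraus (1\<^sub>m n - V * adj V) d)"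
  have K: "?K i \<in> carrier_mat d n" if "i \<in> ?I" for i
    using that V by (auto simp: replace_kraus_def)
  show "channel n d (kraus_map d ?I ?K)"
    by (rule channel_kraus_map[OF _ K])
      (simp_all add: kraus_map_compress[OF V] mtrace_compress[OF V(1) d])
  show "kraus_map d ?I ?K X = compress V X" if "X \<in> carrier_mat n n" for X
    using kraus_map_compress[OF V that] .
qed

lemma compress_supported:
  assumes V: "V \<in> carrier_mat n d" "adj V * V = 1\<^sub>m d" and X: "X \<in> carrier_mat n n"
    and supp: "V * adj V * X * (V * adj V) = X"
  shows "compress V X = adj V * X * V"
  using V X carrier_matD[OF V(1)] mtrace_compression_supported[OF V X supp]
  by (intro eq_matI) (auto simp: compress_def)

lemma embed_supported:
  assumes V: "V \<in> carrier_mat n d" and X: "X \<in> carrier_mat n n"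
    and supp: "V * adj V * X * (V * adj V) = X"
  shows "embed V (adj V * X * V) = X"
proof -
  have "embed V (adj V * X * V) = V * adj V * X * (V * adj V)"
    using carrier_matD[OF V] carrier_matD[OF X]
    by (simp del: assoc_mult_mat add: embed_def mult_assoc_dims)
  then show ?thesis
    using supp by simp
qed

lemma cov_channel_embed:
  assumes V: "V \<in> carrier_mat n d" "adj V * V = 1\<^sub>m d"
    and U: "\<And>g. g \<in> carrier G \<Longrightarrow> U g \<in> carrier_mat n n"
    and comm: "\<And>g. g \<in> carrier G \<Longrightarrow> U g * (V * adj V) = V * adj V * U g"
  shows "cov_channel G d (\<lambda>g. adj V * U g * V) n U (embed V)"
  unfolding cov_channel_def covariant_def
proof (intro conjI ballI)
  show "channel d n (embed V)"
    by (rule channel_embed[OF V])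
  fix g and X :: "complex mat" assume g: "g \<in> carrier G" and X: "X \<in> carrier_mat d d"
  show "embed V (adj V * U g * V * X * adj (adj V * U g * V)) = U g * embed V X * adj (U g)"
    unfolding embed_def by (rule sandwich_intertwined_embed[OF V U[OF g] comm[OF g] X])
qed

lemma cov_channel_compress:
  assumes V: "V \<in> carrier_mat n d" "adj V * V = 1\<^sub>m d" and d: "0 < d"
    and U: "\<And>g. g \<in> carrier G \<Longrightarrow> unitary_mat n (U g)"
    and comm: "\<And>g. g \<in> carrier G \<Longrightarrow> U g * (V * adj V) = V * adj V * U g"
  shows "cov_channel G n U d (\<lambda>g. adj V * U g * V) (compress V)"
  unfolding cov_channel_def covariant_def
proof (intro conjI ballI)
  show "channel n d (compress V)"
    by (rule channel_compress[OF V d])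
  fix g and X :: "complex mat" assume g: "g \<in> carrier G" and X: "X \<in> carrier_mat n n"
  define W where "W = adj V * U g * V"
  have Ug: "U g \<in> carrier_mat n n" "adj (U g) * U g = 1\<^sub>m n"
    using U[OF g] by (auto simp: unitary_mat_def)
  have W: "W \<in> carrier_mat d d" "W * adj W = 1\<^sub>m d" "adj W * W = 1\<^sub>m d"
    using unitary_compression[OF V U[OF g] comm[OF g]] by (auto simp: W_def unitary_mat_def)
  have VXV: "adj V * X * V \<in> carrier_mat d d"
    using V X by (metis adj_carrier mult_carrier_mat)
  have sandwich: "adj V * (U g * X * adj (U g)) * V = W * (adj V * X * V) * adj W"
    unfolding W_def by (rule sandwich_intertwined_compress[OF V Ug(1) comm[OF g] X])
  have "compress V (U g * X * adj (U g)) = W * (adj V * X * V) * adj W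
      + ((mtrace X - mtrace (adj V * X * V)) / of_nat d) \<cdot>\<^sub>m (W * adj W)"
    using V unfolding compress_def sandwich mtrace_sandwich_isometry[OF Ug X]
      mtrace_sandwich_isometry[OF W(1,3) VXV] W(2) by simp
  also have "\<dots> = W * compress V X * adj W"
    using V sandwich_add_smult_one[OF W(1) VXV] by (simp add: compress_def)
  finally show "compress V (U g * X * adj (U g))
      = adj V * U g * V * compress V X * adj (adj V * U g * V)"
    unfolding W_def .
qed

theorem lemma6:
  fixes G :: "('g, 'b) monoid_scheme" and T :: "'g topology"
    and dA dB dS :: nat
    and UA UB :: "'g \<Rightarrow> complex mat"
    and \<rho> \<sigma> V :: "complex mat"
  assumes G: "compact_group G T"
    and repA: "cont_unitary_rep G T dA UA"
    and repB: "cont_unitary_rep G T dB UB"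
    and rho: "is_state dA \<rho>"
    and sigma: "is_state dB \<sigma>"
    and V_iso: "V \<in> carrier_mat dB dS" "adj V * V = 1\<^sub>m dS"
    and decomp: "\<forall>g \<in> carrier G. UB g * (V * adj V) = (V * adj V) * UB g"
    and supp: "(V * adj V) * \<sigma> * (V * adj V) = \<sigma>"
  shows "(\<exists>E. cov_channel G dA UA dB UB E \<and> E \<rho> = \<sigma>) \<longleftrightarrow>
         (\<exists>E. cov_channel G dA UA dS (\<lambda>g. adj V * UB g * V) E \<and> E \<rho> = adj V * \<sigma> * V)"
proof -
  have UB: "\<And>g. g \<in> carrier G \<Longrightarrow> unitary_mat dB (UB g)"
    using repB by (simp add: cont_unitary_rep_def)
  have comm: "\<And>g. g \<in> carrier G \<Longrightarrow> UB g * (V * adj V) = V * adj V * UB g"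
    using decomp by blast
  have \<sigma>: "\<sigma> \<in> carrier_mat dB dB" "mtrace \<sigma> = 1"
    using sigma by (auto simp: is_state_def psd_def)
  have "mtrace (adj V * \<sigma> * V) = 1"
    using mtrace_compression_supported[OF V_iso \<sigma>(1) supp] \<sigma>(2) by simp
  show ?thesis
  proof (intro iffI; elim exE conjE)
    fix E assume E: "cov_channel G dA UA dB UB E" "E \<rho> = \<sigma>"
    have "0 < dS"
      using \<open>mtrace (adj V * \<sigma> * V) = 1\<close> V_iso by (cases dS) (auto simp: mtrace_def)
    then have "cov_channel G dA UA dS (\<lambda>g. adj V * UB g * V) (\<lambda>M. compress V (E M))"
      by (rule cov_channel_comp[OF E(1) cov_channel_compress[OF V_iso _ UB comm]])
    then show "\<exists>E. cov_channel G dA UA dS (\<lambda>g. adj V * UB g * V) E \<and> E \<rho> = adj V * \<sigma> * V"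
      using E(2) compress_supported[OF V_iso \<sigma>(1) supp] by auto
  next
    fix E assume E: "cov_channel G dA UA dS (\<lambda>g. adj V * UB g * V) E" "E \<rho> = adj V * \<sigma> * V"
    have "cov_channel G dA UA dB UB (\<lambda>M. embed V (E M))"
      using UB by (intro cov_channel_comp[OF E(1) cov_channel_embed[OF V_iso _ comm]])
        (simp add: unitary_mat_def)
    then show "\<exists>E. cov_channel G dA UA dB UB E \<and> E \<rho> = \<sigma>"
      using E(2) embed_supported[OF V_iso(1) \<sigma>(1) supp] by auto
  qed
qed

end
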